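(* Define the multiplicative function $f$ by $f(1)=1$ and, for primes $p$ and $\nu\ge1$, $$f(p^\nu)=\begin{cases}\big(1+\frac2p\big)^{-1}\big(1-\frac1p\big)^{-2}\Big(1+\frac4p+\frac1{p^2}-\frac{3\nu+4}{p^{\nu+1}}-\frac{4}{p^{\nu+2}}+\frac{3\nu+2}{p^{\nu+3}}\Big), & p>2,\\[2mm] \frac{52}{11}-\frac{41+15\nu}{11\cdot 2^{\nu}}, & p=2,\end{cases}$$ and for $h\in\mathbb{N}$ put $c_h=\frac{11}{8}f(h)\prod_p(1-\frac1p)^2(1+\frac2p)$. For $X>1$ and $H\ge1$ let $\Sigma_2=\sum_{h\le H}c_hX(\log X)^3$. Then $$\Sigma_2=cXH(\log X)^3+O\big(XH^{\frac12}(\log X)^3\big),\qquad c=\frac43\prod_{p>2}\Big(1+\frac1p\Big)^{-1}\Big(1+\frac1p+\frac1{p^2}\Big),$$ with an absolute implied constant.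
   Context: Sums over $h$ run over positive integers; products over $p$ are over primes. *)

theory Defs
  imports "HOL-Analysis.Analysis" "HOL-Computational_Algebra.Primes"
begin

definition fpp :: "nat \<Rightarrow> nat \<Rightarrow> real" where
  "fpp p \<nu> =
     (if p = 2 then 52/11 - (41 + 15 * real \<nu>) / (11 * 2 ^ \<nu>)
      else inverse (1 + 2 / real p) * inverse ((1 - 1 / real p)\<^sup>2) *
           (1 + 4 / real p + 1 / (real p)\<^sup>2
              - (3 * real \<nu> + 4) / real p ^ (\<nu> + 1)
              - 4 / real p ^ (\<nu> + 2)
              + (3 * real \<nu> + 2) / real p ^ (\<nu> + 3)))"

definition f :: "nat \<Rightarrow> real" where
  "f n = (\<Prod>p\<in>prime_factors n. fpp p (multiplicity p n))"

definition c_coef :: "nat \<Rightarrow> real" where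
  "c_coef h = 11/8 * f h *
     (\<Prod>p. if prime p then (1 - 1 / real p)\<^sup>2 * (1 + 2 / real p) else 1)"

definition c_const :: real where
  "c_const = 4/3 *
     (\<Prod>p. if prime p \<and> p > 2
            then inverse (1 + 1 / real p) * (1 + 1 / real p + 1 / (real p)\<^sup>2) else 1)"

definition Sigma2 :: "real \<Rightarrow> real \<Rightarrow> real" where
  "Sigma2 X H = (\<Sum>h\<in>{1..nat \<lfloor>H\<rfloor>}. c_coef h * X * (ln X) ^ 3)"

end

theory Submission
  imports Defs "HOL-Probability.Probability_Mass_Function"
begin

text \<open>
  Write f = 1 * g as a Dirichlet convolution: telescoping the prime-power values of f gives the
  multiplicative g with g(p^k) = p^(-k) (1 + beta_p k). Hence
  sum_{h <= N} f(h) = sum_d g(d) floor(N/d) = N sum_d g(d)/d + O(sqrt N sum_d g(d)/sqrt d),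
  because |floor x - x| <= min 1 x <= sqrt x, and the last series converges since its Euler
  factors are 1 + O(p^(-3/2)). Multiplied factor by factor into the product defining c_h, the Euler
  product of sum_d g(d)/d gives 32/33 at p = 2 and the factor of c at odd p, whence the constant c.
\<close>

section \<open>Multiplicative functions given at prime powers\<close>

text \<open>Unlike f, it
  vanishes at 0 (the usual convention for arithmetic functions), so that quotients such as
  mult_of_pp \<phi> d / real d need no side condition d > 0.\<close>

definition mult_of_pp :: "(nat \<Rightarrow> nat \<Rightarrow> 'a :: comm_semiring_1) \<Rightarrow> nat \<Rightarrow> 'a" where
  "mult_of_pp \<phi> n = (if n = 0 then 0 else \<Prod>p\<in>prime_factors n. \<phi> p (multiplicity p n))"

lemma mult_of_pp_0 [simp]: "mult_of_pp \<phi> 0 = 0"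
  by (simp add: mult_of_pp_def)

lemma mult_of_pp_nonneg:
  fixes \<phi> :: "nat \<Rightarrow> nat \<Rightarrow> 'a :: linordered_semidom"
  assumes "\<And>p k. \<phi> p k \<ge> 0"
  shows "mult_of_pp \<phi> n \<ge> 0"
  by (simp add: mult_of_pp_def assms prod_nonneg)

lemma multiplicity_prod_prime_factors_powers:
  fixes n q :: nat
  assumes "prime q"
  shows "multiplicity q (\<Prod>p\<in>prime_factors n. p ^ e p) = (if q \<in> prime_factors n then e q else 0)"
  by (rule multiplicity_prod_prime_powers) (auto simp: assms in_prime_factors_imp_prime)

lemma prod_prime_factors_powers_pos: "(\<Prod>p\<in>prime_factors n. p ^ e p) > (0 :: nat)"
  by (auto intro!: prod_pos dest: in_prime_factors_imp_prime simp: prime_gt_0_nat)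

lemma bij_betw_exponents_divisors:
  fixes n :: nat
  assumes "n > 0"
  shows "bij_betw (\<lambda>e. \<Prod>p\<in>prime_factors n. p ^ e p)
           (PiE (prime_factors n) (\<lambda>p. {..multiplicity p n})) {d. d dvd n}"
proof -
  let ?P = "prime_factors n"
  define h where "h e = (\<Prod>p\<in>?P. p ^ e p)" for e :: "nat \<Rightarrow> nat"
  have mult_h: "multiplicity q (h e) = (if q \<in> ?P then e q else 0)" if "prime q" for q e
    unfolding h_def using that by (rule multiplicity_prod_prime_factors_powers)
  have h_pos: "h e > 0" for e
    unfolding h_def by (rule prod_prime_factors_powers_pos)
  have "bij_betw h (PiE ?P (\<lambda>p. {..multiplicity p n})) {d. d dvd n}"
  proof (rule bij_betwI')
    fix e1 e2 assume e: "e1 \<in> PiE ?P (\<lambda>p. {..multiplicity p n})" "e2 \<in> PiE ?P (\<lambda>p. {..multiplicity p n})"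
    show "(h e1 = h e2) = (e1 = e2)"
    proof
      assume eq: "h e1 = h e2"
      have "e1 p = e2 p" if "p \<in> ?P" for p
        using mult_h[of p e1] mult_h[of p e2] eq that by (simp add: in_prime_factors_imp_prime)
      then show "e1 = e2"
        using e by (auto intro: PiE_ext)
    qed simp
  next
    fix e assume "e \<in> PiE ?P (\<lambda>p. {..multiplicity p n})"
    then have "multiplicity q (h e) \<le> multiplicity q n" if "prime q" for q
      by (auto simp: mult_h[OF that] PiE_iff)
    then show "h e \<in> {d. d dvd n}"
      using h_pos[of e] by (auto intro: multiplicity_le_imp_dvd)
  next
    fix d assume "d \<in> {d. d dvd n}"
    then have d: "d dvd n" "d > 0"
      using assms by (auto intro: Nat.gr0I)
    let ?e = "restrict (\<lambda>p. multiplicity p d) ?P"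
    have "multiplicity q d = multiplicity q (h ?e)" if "prime q" for q
    proof (cases "q \<in> ?P")
      case False
      then have "\<not> q dvd d"
        using that assms d(1) dvd_trans by (auto simp: prime_factors_dvd)
      then show ?thesis
        using False by (simp add: mult_h[OF that] not_dvd_imp_multiplicity_0)
    qed (simp add: mult_h[OF that])
    then have "d = h ?e"
      using multiplicity_eq_nat[OF d(2) h_pos] by blast
    moreover have "?e \<in> PiE ?P (\<lambda>p. {..multiplicity p n})"
      using d assms by (auto simp: PiE_iff dvd_imp_multiplicity_le)
    ultimately show "\<exists>e\<in>PiE ?P (\<lambda>p. {..multiplicity p n}). d = h e"
      by blast
  qed
  then show ?thesis
    unfolding h_def .
qed

lemma sum_divisors_mult_of_pp:
  fixes \<phi> :: "nat \<Rightarrow> nat \<Rightarrow> 'a :: comm_semiring_1"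
  assumes "n > 0" and "\<And>p. \<phi> p 0 = 1"
  shows "(\<Sum>d | d dvd n. mult_of_pp \<phi> d) = (\<Prod>p\<in>prime_factors n. \<Sum>k\<le>multiplicity p n. \<phi> p k)"
proof -
  let ?P = "prime_factors n"
  let ?E = "PiE ?P (\<lambda>p. {..multiplicity p n})"
  have "mult_of_pp \<phi> (\<Prod>p\<in>?P. p ^ e p) = (\<Prod>p\<in>?P. \<phi> p (e p))" for e
  proof -
    define d where "d = (\<Prod>p\<in>?P. p ^ e p)"
    have mult: "multiplicity q d = (if q \<in> ?P then e q else 0)" if "prime q" for q
      unfolding d_def using that by (rule multiplicity_prod_prime_factors_powers)
    have "d > 0"
      unfolding d_def by (rule prod_prime_factors_powers_pos)
    have pf: "prime_factors d = {p\<in>?P. e p > 0}"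
      using mult by (auto simp: prime_factors_multiplicity[of d] in_prime_factors_imp_prime split: if_splits)
    have "mult_of_pp \<phi> d = (\<Prod>p\<in>{p\<in>?P. e p > 0}. \<phi> p (e p))"
      unfolding mult_of_pp_def pf using \<open>d > 0\<close> by (auto simp: mult in_prime_factors_imp_prime intro: prod.cong)
    also have "\<dots> = (\<Prod>p\<in>?P. \<phi> p (e p))"
      by (rule prod.mono_neutral_left) (auto simp: assms(2))
    finally show ?thesis
      unfolding d_def .
  qed
  then have "(\<Sum>d | d dvd n. mult_of_pp \<phi> d) = (\<Sum>e\<in>?E. \<Prod>p\<in>?P. \<phi> p (e p))"
    by (simp add: sum.reindex_bij_betw[OF bij_betw_exponents_divisors[OF assms(1)], symmetric])
  also have "\<dots> = (\<Prod>p\<in>?P. \<Sum>k\<le>multiplicity p n. \<phi> p k)"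
    by (rule prod_sum_PiE[symmetric]) auto
  finally show ?thesis .
qed

lemma mult_of_pp_divide_powr:
  fixes \<phi> :: "nat \<Rightarrow> nat \<Rightarrow> real"
  shows "mult_of_pp \<phi> d / real d powr s = mult_of_pp (\<lambda>p k. \<phi> p k / (real p powr s) ^ k) d"
proof (cases "d = 0")
  case False
  have "real d = real (\<Prod>p\<in>prime_factors d. p ^ multiplicity p d)"
    using prod_prime_factors[of d] False by simp
  moreover have "(real p ^ k) powr s = (real p powr s) ^ k" if "p > 0" for p k
    using that by (simp add: powr_realpow[symmetric] powr_powr powr_power mult.commute)
  ultimately have "real d powr s = (\<Prod>p\<in>prime_factors d. (real p powr s) ^ multiplicity p d)"
    by (simp add: prod_powr_distrib prime_factors_gt_0_nat)
  then show ?thesis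
    using False by (simp add: mult_of_pp_def prod_dividef)
qed simp

lemma sum_mult_of_pp_le_prod_sum:
  fixes \<psi> :: "nat \<Rightarrow> nat \<Rightarrow> real"
  assumes "\<And>p k. \<psi> p k \<ge> 0" "\<And>p. \<psi> p 0 = 1" "fact n dvd m" "m > 0"
  shows "(\<Sum>d\<le>n. mult_of_pp \<psi> d) \<le> (\<Prod>p\<in>prime_factors m. \<Sum>k\<le>multiplicity p m. \<psi> p k)"
proof -
  have "(\<Sum>d\<le>n. mult_of_pp \<psi> d) = (\<Sum>d\<in>{..n} - {0}. mult_of_pp \<psi> d)"
    by (rule sum.mono_neutral_right) auto
  also have "\<dots> \<le> (\<Sum>d | d dvd m. mult_of_pp \<psi> d)"
    using assms(3,4) by (intro sum_mono2 mult_of_pp_nonneg assms(1))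
      (auto intro: dvd_trans[OF dvd_fact])
  also have "\<dots> = (\<Prod>p\<in>prime_factors m. \<Sum>k\<le>multiplicity p m. \<psi> p k)"
    using assms(4,2) by (rule sum_divisors_mult_of_pp)
  finally show ?thesis .
qed

lemma summable_mult_of_pp:
  fixes \<psi> :: "nat \<Rightarrow> nat \<Rightarrow> real"
  assumes nonneg: "\<And>p k. \<psi> p k \<ge> 0" and one: "\<And>p. \<psi> p 0 = 1"
    and local_bound: "\<And>p m. prime p \<Longrightarrow> (\<Sum>k\<le>m. \<psi> p k) \<le> 1 + a p"
    and "\<And>p. a p \<ge> 0" and "summable a"
  shows "summable (mult_of_pp \<psi>)"
proof (rule summableI_nonneg_bounded)
  show "mult_of_pp \<psi> d \<ge> 0" for d
    using nonneg by (rule mult_of_pp_nonneg)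
  fix n
  have "(\<Sum>d<n. mult_of_pp \<psi> d) \<le> (\<Sum>d\<le>n. mult_of_pp \<psi> d)"
    using nonneg by (intro sum_mono2 mult_of_pp_nonneg) auto
  also have "\<dots> \<le> (\<Prod>p\<in>prime_factors (fact n). \<Sum>k\<le>multiplicity p (fact n). \<psi> p k)"
    using nonneg one by (rule sum_mult_of_pp_le_prod_sum) auto
  also have "\<dots> \<le> (\<Prod>p\<in>prime_factors (fact n). exp (a p))"
  proof (rule prod_mono)
    fix p :: nat assume "p \<in> prime_factors (fact n)"
    then have "(\<Sum>k\<le>multiplicity p (fact n). \<psi> p k) \<le> 1 + a p"
      by (intro local_bound) (rule in_prime_factors_imp_prime)
    moreover have "(\<Sum>k\<le>multiplicity p (fact n). \<psi> p k) \<ge> 0"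
      by (intro sum_nonneg nonneg)
    ultimately show "0 \<le> (\<Sum>k\<le>multiplicity p (fact n). \<psi> p k) \<and> (\<Sum>k\<le>multiplicity p (fact n). \<psi> p k) \<le> exp (a p)"
      using exp_ge_add_one_self[of "a p"] by linarith
  qed
  also have "\<dots> = exp (\<Sum>p\<in>prime_factors (fact n). a p)"
    by (simp add: exp_sum)
  also have "\<dots> \<le> exp (suminf a)"
    using assms(4,5) by (simp add: sum_le_suminf)
  finally show "(\<Sum>d<n. mult_of_pp \<psi> d) \<le> exp (suminf a)" .
qed

text \<open>The divisors of (n!)^(M+1) include 1, ..., n, and their sum is the product of the local sums
  truncated at (M + 1) v_p(n!), which tends to the product of the full local sums as M grows.\<close>

lemma euler_partial_product_bounds:
  fixes \<psi> :: "nat \<Rightarrow> nat \<Rightarrow> real"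
  assumes nonneg: "\<And>p k. \<psi> p k \<ge> 0" and one: "\<And>p. \<psi> p 0 = 1"
    and summable: "summable (mult_of_pp \<psi>)" and local_summable: "\<And>p. prime p \<Longrightarrow> summable (\<psi> p)"
  shows "(\<Sum>d\<le>n. mult_of_pp \<psi> d) \<le> (\<Prod>p\<in>prime_factors (fact n). suminf (\<psi> p))"
    and "(\<Prod>p\<in>prime_factors (fact n). suminf (\<psi> p)) \<le> suminf (mult_of_pp \<psi>)"
proof -
  define F :: nat where "F = fact n"
  define X where "X M = (\<Prod>p\<in>prime_factors F. \<Sum>k\<le>Suc M * multiplicity p F. \<psi> p k)" for M
  have "F > 0"
    by (simp add: F_def)
  have X_eq: "X M = (\<Prod>p\<in>prime_factors (F ^ Suc M). \<Sum>k\<le>multiplicity p (F ^ Suc M). \<psi> p k)" for M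
  proof -
    have "prime_factors (F ^ Suc M) = prime_factors F"
      using \<open>F > 0\<close>
      by (auto simp: prime_factors_multiplicity prime_elem_multiplicity_power_distrib simp del: power_Suc)
    then show ?thesis
      unfolding X_def using \<open>F > 0\<close>
      by (auto intro!: prod.cong simp: prime_elem_multiplicity_power_distrib in_prime_factors_imp_prime
          simp del: power_Suc)
  qed
  have "X \<longlonglongrightarrow> (\<Prod>p\<in>prime_factors F. suminf (\<psi> p))"
    unfolding X_def
  proof (rule tendsto_prod)
    fix p assume p: "p \<in> prime_factors F"
    then have "strict_mono (\<lambda>M. Suc M * multiplicity p F)"
      by (auto simp: strict_mono_Suc_iff prime_factors_multiplicity)
    from LIMSEQ_subseq_LIMSEQ[OF summable_LIMSEQ'[OF local_summable] this]
    show "(\<lambda>M. \<Sum>k\<le>Suc M * multiplicity p F. \<psi> p k) \<longlonglongrightarrow> suminf (\<psi> p)"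
      using p by (simp add: o_def in_prime_factors_imp_prime)
  qed
  moreover have "(\<Sum>d\<le>n. mult_of_pp \<psi> d) \<le> X M" for M
    unfolding X_eq F_def using nonneg one by (rule sum_mult_of_pp_le_prod_sum) auto
  moreover have "X M \<le> suminf (mult_of_pp \<psi>)" for M
  proof -
    have "X M = (\<Sum>d | d dvd F ^ Suc M. mult_of_pp \<psi> d)"
      unfolding X_eq using \<open>F > 0\<close> one by (intro sum_divisors_mult_of_pp[symmetric]) auto
    also have "\<dots> \<le> suminf (mult_of_pp \<psi>)"
      using \<open>F > 0\<close> nonneg by (intro sum_le_suminf summable mult_of_pp_nonneg) auto
    finally show ?thesis .
  qed
  ultimately show "(\<Sum>d\<le>n. mult_of_pp \<psi> d) \<le> (\<Prod>p\<in>prime_factors (fact n). suminf (\<psi> p))"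
    and "(\<Prod>p\<in>prime_factors (fact n). suminf (\<psi> p)) \<le> suminf (mult_of_pp \<psi>)"
    unfolding F_def by (auto intro: LIMSEQ_le_const LIMSEQ_le_const2)
qed

lemma euler_product_LIMSEQ:
  fixes \<psi> :: "nat \<Rightarrow> nat \<Rightarrow> real"
  assumes "\<And>p k. \<psi> p k \<ge> 0" "\<And>p. \<psi> p 0 = 1"
    and "summable (mult_of_pp \<psi>)" "\<And>p. prime p \<Longrightarrow> summable (\<psi> p)"
  shows "(\<lambda>n. \<Prod>p\<le>n. if prime p then suminf (\<psi> p) else 1) \<longlonglongrightarrow> suminf (mult_of_pp \<psi>)"
proof (rule tendsto_sandwich)
  have "(\<Prod>p\<le>n. if prime p then suminf (\<psi> p) else 1) = (\<Prod>p\<in>prime_factors (fact n). suminf (\<psi> p))" for n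
  proof -
    have "(\<Prod>p\<le>n. if prime p then suminf (\<psi> p) else 1) = (\<Prod>p\<in>{p\<in>{..n}. prime p}. suminf (\<psi> p))"
      by (rule prod.inter_filter[symmetric]) simp
    also have "{p\<in>{..n}. prime p} = prime_factors (fact n)"
      by (auto simp: prime_factors_fact dest: prime_ge_2_nat)
    finally show ?thesis .
  qed
  then show "\<forall>\<^sub>F n in sequentially. (\<Sum>d\<le>n. mult_of_pp \<psi> d) \<le> (\<Prod>p\<le>n. if prime p then suminf (\<psi> p) else 1)"
    and "\<forall>\<^sub>F n in sequentially. (\<Prod>p\<le>n. if prime p then suminf (\<psi> p) else 1) \<le> suminf (mult_of_pp \<psi>)"
    using euler_partial_product_bounds[OF assms] by simp_all
  show "(\<lambda>n. \<Sum>d\<le>n. mult_of_pp \<psi> d) \<longlonglongrightarrow> suminf (mult_of_pp \<psi>)"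
    using assms(3) by (rule summable_LIMSEQ')
qed simp

section \<open>Summatory functions of convolutions with 1\<close>

lemma card_multiples_atLeastAtMost:
  fixes d N :: nat
  assumes "d > 0"
  shows "card {h\<in>{1..N}. d dvd h} = N div d"
proof -
  have "{h\<in>{1..N}. d dvd h} = (\<lambda>k. d * k) ` {1..N div d}"
  proof (intro set_eqI iffI)
    fix h assume "h \<in> {h\<in>{1..N}. d dvd h}"
    then obtain k where k: "h = d * k" "1 \<le> h" "h \<le> N"
      by auto
    then have "k = h div d" "k \<noteq> 0"
      using assms by auto
    then have "k \<in> {1..N div d}"
      using k(3) by (auto intro: div_le_mono)
    then show "h \<in> (\<lambda>k. d * k) ` {1..N div d}"
      using k(1) by blast
  next
    fix h assume "h \<in> (\<lambda>k. d * k) ` {1..N div d}"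
    then obtain k where k: "k \<in> {1..N div d}" "h = d * k"
      by blast
    then have "d * k \<le> d * (N div d)"
      by simp
    also have "\<dots> \<le> N"
      by simp
    finally show "h \<in> {h\<in>{1..N}. d dvd h}"
      using k assms by auto
  qed
  moreover have "inj_on (\<lambda>k. d * k) {1..N div d}"
    using assms by (auto simp: inj_on_def)
  ultimately show ?thesis
    by (simp add: card_image)
qed

lemma sum_sum_divisors:
  fixes G :: "nat \<Rightarrow> real"
  shows "(\<Sum>h\<in>{1..N}. \<Sum>d | d dvd h. G d) = (\<Sum>d\<in>{1..N}. G d * real (N div d))"
proof -
  have "(\<Sum>d | d dvd h. G d) = (\<Sum>d\<in>{1..N}. if d dvd h then G d else 0)" if "h \<in> {1..N}" for h
  proof -
    have "{d. d dvd h} = {d\<in>{1..N}. d dvd h}"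
      using that by (auto dest: dvd_imp_le intro: Nat.gr0I)
    then show ?thesis
      using sum.inter_filter[of "{1..N}" G "\<lambda>d. d dvd h"] by simp
  qed
  then have "(\<Sum>h\<in>{1..N}. \<Sum>d | d dvd h. G d) = (\<Sum>h\<in>{1..N}. \<Sum>d\<in>{1..N}. if d dvd h then G d else 0)"
    by (rule sum.cong[OF refl])
  also have "\<dots> = (\<Sum>d\<in>{1..N}. \<Sum>h\<in>{1..N}. if d dvd h then G d else 0)"
    by (rule sum.swap)
  also have "\<dots> = (\<Sum>d\<in>{1..N}. G d * real (N div d))"
  proof (rule sum.cong[OF refl])
    fix d assume "d \<in> {1..N}"
    have "(\<Sum>h\<in>{1..N}. if d dvd h then G d else 0) = (\<Sum>h\<in>{h\<in>{1..N}. d dvd h}. G d)"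
      by (rule sum.inter_filter[symmetric]) simp
    also have "\<dots> = real (N div d) * G d"
      using \<open>d \<in> {1..N}\<close> by (subst card_multiples_atLeastAtMost[symmetric]) auto
    finally show "(\<Sum>h\<in>{1..N}. if d dvd h then G d else 0) = G d * real (N div d)"
      by simp
  qed
  finally show ?thesis .
qed

lemma abs_div_minus_divide_le_sqrt:
  fixes N d :: nat
  shows "\<bar>real (N div d) - real N / real d\<bar> \<le> sqrt (real N / real d)"
proof -
  define x where "x = real N / real d"
  have x: "x \<ge> 0" "real (N div d) = of_int \<lfloor>x\<rfloor>"
    by (simp_all add: x_def floor_divide_of_nat_eq)
  show ?thesis
  proof (cases "x < 1")
    case True
    then have "\<lfloor>x\<rfloor> = 0"
      using x by linarith
    moreover have "x \<le> sqrt x"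
    proof -
      have "x = sqrt x * sqrt x"
        using x by simp
      also have "\<dots> \<le> sqrt x * 1"
        using True x by (intro mult_left_mono) auto
      finally show ?thesis
        by simp
    qed
    ultimately show ?thesis
      using x by (simp add: x_def)
  next
    case False
    then have "\<bar>of_int \<lfloor>x\<rfloor> - x\<bar> \<le> sqrt x"
      using real_sqrt_ge_one[of x] by linarith
    then show ?thesis
      using x by (simp add: x_def)
  qed
qed

lemma summable_divide_of_summable_divide_sqrt:
  fixes G :: "nat \<Rightarrow> real"
  assumes "\<And>d. G d \<ge> 0" and "summable (\<lambda>d. G d / sqrt (real d))"
  shows "summable (\<lambda>d. G d / real d)"
proof (rule summable_comparison_test[OF _ assms(2)])
  have "sqrt (real d) \<le> real d" for d
    by (rule real_le_lsqrt) (simp_all add: power2_eq_square flip: of_nat_mult)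
  then have "\<bar>G d / real d\<bar> \<le> G d / sqrt (real d)" for d
    using assms(1)[of d] by (cases "d = 0") (auto intro!: divide_left_mono)
  then show "\<exists>N. \<forall>d\<ge>N. norm (G d / real d) \<le> G d / sqrt (real d)"
    by auto
qed

text \<open>Since N div d = 0 for d > N, the finite sum is the whole series, and the error of the
  d-th term is at most G d sqrt (N/d).\<close>

lemma abs_sum_times_div_minus_le:
  fixes G :: "nat \<Rightarrow> real"
  assumes nonneg: "\<And>d. G d \<ge> 0" and summable: "summable (\<lambda>d. G d / sqrt (real d))"
  shows "\<bar>(\<Sum>d\<in>{1..N}. G d * real (N div d)) - (\<Sum>d. G d / real d) * real N\<bar>
           \<le> (\<Sum>d. G d / sqrt (real d)) * sqrt (real N)"
proof -
  have "summable (\<lambda>d. G d / real d)"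
    using nonneg summable by (rule summable_divide_of_summable_divide_sqrt)
  then have "(\<lambda>d. G d / real d * real N) sums ((\<Sum>d. G d / real d) * real N)"
    by (intro sums_mult2 summable_sums)
  moreover have "(\<lambda>d. G d * real (N div d)) sums (\<Sum>d\<in>{1..N}. G d * real (N div d))"
    by (rule sums_finite) (auto simp: not_le)
  ultimately have "(\<lambda>d. G d * real (N div d) - G d / real d * real N)
      sums ((\<Sum>d\<in>{1..N}. G d * real (N div d)) - (\<Sum>d. G d / real d) * real N)"
    by (intro sums_diff)
  then have error_sums: "(\<lambda>d. G d * (real (N div d) - real N / real d))
      sums ((\<Sum>d\<in>{1..N}. G d * real (N div d)) - (\<Sum>d. G d / real d) * real N)"
    by (simp add: right_diff_distrib)
  have bound_sums: "(\<lambda>d. G d / sqrt (real d) * sqrt (real N)) sums ((\<Sum>d. G d / sqrt (real d)) * sqrt (real N))"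
    using summable by (intro sums_mult2 summable_sums)
  have term_bound: "norm (G d * (real (N div d) - real N / real d)) \<le> G d / sqrt (real d) * sqrt (real N)" for d
  proof -
    have "\<bar>G d * (real (N div d) - real N / real d)\<bar> \<le> G d * sqrt (real N / real d)"
      using abs_div_minus_divide_le_sqrt[of N d] nonneg[of d] by (simp add: abs_mult mult_left_mono)
    then show ?thesis
      by (simp add: real_sqrt_divide)
  qed
  show ?thesis
    using norm_sums_le[OF error_sums bound_sums term_bound] by simp
qed

section \<open>The local factors of f\<close>

definition fpp_numerator :: "real \<Rightarrow> nat \<Rightarrow> real" where
  "fpp_numerator u \<nu> = 1 + 4 * u + u\<^sup>2 - (3 * real \<nu> + 4) * u ^ (\<nu> + 1) - 4 * u ^ (\<nu> + 2)
     + (3 * real \<nu> + 2) * u ^ (\<nu> + 3)"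

lemma fpp_numerator_0: "fpp_numerator u 0 = (1 + 2 * u) * (1 - u)\<^sup>2"
  by (simp add: fpp_numerator_def algebra_simps power2_eq_square power3_eq_cube)

lemma fpp_numerator_Suc:
  "fpp_numerator u (Suc \<nu>) =
     fpp_numerator u \<nu> + u ^ Suc \<nu> * (1 - u)\<^sup>2 * (1 + 2 * u + 3 * (1 + u) * real (Suc \<nu>))"
  by (simp add: fpp_numerator_def algebra_simps power_add eval_nat_numeral)

lemma fpp_eq_numerator_divide:
  assumes "p \<noteq> 2"
  shows "fpp p \<nu> = fpp_numerator (1 / real p) \<nu> / ((1 + 2 / real p) * (1 - 1 / real p)\<^sup>2)"
  using assms by (simp add: fpp_def fpp_numerator_def power_one_over field_simps)

definition beta_pp :: "nat \<Rightarrow> real" where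
  "beta_pp p = (if p = 2 then 15/11 else 3 * (1 + 1 / real p) / (1 + 2 / real p))"

definition gpp :: "nat \<Rightarrow> nat \<Rightarrow> real" where
  "gpp p k = (1 / real p) ^ k * (1 + beta_pp p * real k)"

lemma fpp_eq_sum_gpp:
  assumes "prime p"
  shows "fpp p \<nu> = (\<Sum>k\<le>\<nu>. gpp p k)"
proof (cases "p = 2")
  case True
  show ?thesis
    by (induction \<nu>) (simp_all add: True fpp_def gpp_def beta_pp_def field_simps)
next
  case False
  define u where "u = 1 / real p"
  have "p > 2"
    using False prime_ge_2_nat[OF assms] by simp
  then have u: "1 + 2 * u \<noteq> 0" "(1 - u)\<^sup>2 \<noteq> 0" "2 / real p = 2 * u"
    by (auto simp: u_def add_nonneg_eq_0_iff)
  show ?thesis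
  proof (induction \<nu>)
    case 0
    show ?case
      using u by (simp add: fpp_eq_numerator_divide[OF False] fpp_numerator_0 gpp_def flip: u_def)
  next
    case (Suc \<nu>)
    have "fpp p (Suc \<nu>) = fpp p \<nu> +
        u ^ Suc \<nu> * (1 - u)\<^sup>2 * (1 + 2 * u + 3 * (1 + u) * real (Suc \<nu>)) / ((1 + 2 * u) * (1 - u)\<^sup>2)"
      unfolding fpp_eq_numerator_divide[OF False] fpp_numerator_Suc u(3) u_def[symmetric] by (rule add_divide_distrib)
    also have "u ^ Suc \<nu> * (1 - u)\<^sup>2 * (1 + 2 * u + 3 * (1 + u) * real (Suc \<nu>)) / ((1 + 2 * u) * (1 - u)\<^sup>2)
        = u ^ Suc \<nu> * (1 + 3 * (1 + u) / (1 + 2 * u) * real (Suc \<nu>))"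
      using u(1,2) by simp (simp add: field_simps)
    also have "\<dots> = gpp p (Suc \<nu>)"
      using False by (simp add: gpp_def beta_pp_def u_def)
    finally show ?case
      using Suc by simp
  qed
qed

lemma beta_pp_nonneg: "beta_pp p \<ge> 0"
  by (simp add: beta_pp_def)

lemma beta_pp_le_3: "beta_pp p \<le> 3"
  by (simp add: beta_pp_def divide_le_eq add_pos_nonneg)

lemma gpp_0 [simp]: "gpp p 0 = 1"
  by (simp add: gpp_def)

lemma gpp_nonneg: "gpp p k \<ge> 0"
  by (simp add: gpp_def beta_pp_nonneg)

lemma f_eq_sum_divisors:
  assumes "n > 0"
  shows "f n = (\<Sum>d | d dvd n. mult_of_pp gpp d)"
  unfolding f_def sum_divisors_mult_of_pp[where \<phi> = gpp, OF assms gpp_0]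
  by (intro prod.cong refl fpp_eq_sum_gpp) (rule in_prime_factors_imp_prime)

lemma sums_geometric_linear:
  fixes z b :: real
  assumes "\<bar>z\<bar> < 1"
  shows "(\<lambda>k. z ^ k * (1 + b * real k)) sums (1 / (1 - z) + b * (z / (1 - z)\<^sup>2))"
proof -
  have "(\<lambda>k. z ^ k + b * (z ^ k * real k)) sums (1 / (1 - z) + b * (z / (1 - z)\<^sup>2))"
    using assms by (intro sums_add sums_mult geometric_sums geometric_sums_times_n) auto
  then show ?thesis
    by (simp add: algebra_simps)
qed

lemma sum_geometric_linear_le:
  fixes z b :: real
  assumes z: "0 \<le> z" "z \<le> 1/2" and b: "0 \<le> b" "b \<le> 3"
  shows "(\<Sum>k\<le>m. z ^ k * (1 + b * real k)) \<le> 1 + 14 * z"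
proof -
  have "(\<Sum>k\<le>m. z ^ k * (1 + b * real k)) \<le> (\<Sum>k\<le>m. z ^ k * (1 + 3 * real k))"
    using z b by (intro sum_mono mult_left_mono add_left_mono mult_right_mono) auto
  also have "\<dots> \<le> 1 / (1 - z) + 3 * (z / (1 - z)\<^sup>2)"
  proof -
    have "(\<lambda>k. z ^ k * (1 + 3 * real k)) sums (1 / (1 - z) + 3 * (z / (1 - z)\<^sup>2))"
      using z by (intro sums_geometric_linear) auto
    moreover from this have "(\<Sum>k\<le>m. z ^ k * (1 + 3 * real k)) \<le> (\<Sum>k. z ^ k * (1 + 3 * real k))"
      using z by (intro sum_le_suminf sums_summable) auto
    ultimately show ?thesis
      by (simp add: sums_iff)
  qed
  also have "\<dots> \<le> 1 + 14 * z"
  proof -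
    have "1 / (1 - z) \<le> 1 + 2 * z"
      using z by (simp add: divide_le_eq algebra_simps) (simp add: power2_eq_square mult_left_le)
    moreover have "z / (1 - z)\<^sup>2 \<le> 4 * z"
    proof -
      have "1/4 \<le> (1 - z)\<^sup>2"
        using z power_mono[of "1/2" "1 - z" 2] by (simp add: power2_eq_square)
      moreover from this have "z \<le> 4 * z * (1 - z)\<^sup>2"
        using mult_left_mono[of "1/4" "(1 - z)\<^sup>2" "4 * z"] z by simp
      ultimately show ?thesis
        by (simp add: divide_le_eq)
    qed
    ultimately show ?thesis
      by linarith
  qed
  finally show ?thesis .
qed

lemma gpp_divide_power: "gpp p k / x ^ k = (1 / (real p * x)) ^ k * (1 + beta_pp p * real k)"
  by (simp add: gpp_def power_divide power_mult_distrib)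

abbreviation g :: "nat \<Rightarrow> real" where
  "g \<equiv> mult_of_pp gpp"

lemma g_nonneg: "g d \<ge> 0"
  by (intro mult_of_pp_nonneg gpp_nonneg)

lemma g_divide_sqrt: "g d / sqrt (real d) = mult_of_pp (\<lambda>p k. gpp p k / sqrt (real p) ^ k) d"
  using mult_of_pp_divide_powr[of gpp d "1/2"] by (simp add: powr_half_sqrt)

lemma g_divide: "g d / real d = mult_of_pp (\<lambda>p k. gpp p k / real p ^ k) d"
  using mult_of_pp_divide_powr[of gpp d 1] by simp

lemma one_divide_mult_sqrt_eq_powr:
  fixes x :: real
  assumes "x \<ge> 0"
  shows "1 / (x * sqrt x) = x powr (-(3/2))"
  using assms by (simp add: powr_minus_divide powr_half_sqrt[symmetric] powr_mult_base)

lemma summable_g_divide_sqrt: "summable (\<lambda>d. g d / sqrt (real d))"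
proof -
  define a where "a p = 14 * (1 / (real p * sqrt (real p)))" for p
  have "summable a"
    unfolding a_def one_divide_mult_sqrt_eq_powr[OF of_nat_0_le_iff]
    by (intro summable_mult) (simp add: summable_real_powr_iff)
  moreover have "(\<Sum>k\<le>m. gpp p k / sqrt (real p) ^ k) \<le> 1 + a p" if "prime p" for p m
  proof -
    have "2 \<le> real p" "1 \<le> sqrt (real p)"
      using prime_ge_2_nat[OF that] by simp_all
    then have "2 \<le> real p * sqrt (real p)"
      using mult_mono[of 2 "real p" 1 "sqrt (real p)"] by simp
    then have "1 / (real p * sqrt (real p)) \<le> 1/2"
      by (simp add: divide_le_eq)
    then show ?thesis
      unfolding gpp_divide_power a_def
      by (intro sum_geometric_linear_le beta_pp_nonneg beta_pp_le_3) auto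
  qed
  ultimately have "summable (mult_of_pp (\<lambda>p k. gpp p k / sqrt (real p) ^ k))"
    by (intro summable_mult_of_pp[where a = a]) (auto simp: a_def gpp_nonneg)
  then show ?thesis
    by (simp add: g_divide_sqrt)
qed

lemma sum_f_approx:
  "\<bar>(\<Sum>h\<in>{1..N}. f h) - (\<Sum>d. g d / real d) * real N\<bar> \<le> (\<Sum>d. g d / sqrt (real d)) * sqrt (real N)"
proof -
  have "(\<Sum>h\<in>{1..N}. f h) = (\<Sum>h\<in>{1..N}. \<Sum>d | d dvd h. g d)"
    by (intro sum.cong refl f_eq_sum_divisors) auto
  also have "\<dots> = (\<Sum>d\<in>{1..N}. g d * real (N div d))"
    by (rule sum_sum_divisors)
  finally show ?thesis
    using abs_sum_times_div_minus_le[OF g_nonneg summable_g_divide_sqrt] by simp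
qed

lemma gpp_local_sums:
  assumes "prime p"
  shows "(\<lambda>k. gpp p k / real p ^ k) sums (1 / (1 - 1 / real p ^ 2) + beta_pp p * (1 / real p ^ 2 / (1 - 1 / real p ^ 2)\<^sup>2))"
proof -
  have "real p \<ge> 2"
    using prime_ge_2_nat[OF assms] by simp
  then have "\<bar>1 / real p ^ 2\<bar> < 1"
    using power_mono[of 2 "real p" 2] by simp
  from sums_geometric_linear[OF this] show ?thesis
    by (simp add: gpp_divide_power power2_eq_square)
qed

lemma c_coef_factor_times_local_sum:
  assumes "prime p"
  shows "(1 - 1 / real p)\<^sup>2 * (1 + 2 / real p) * (\<Sum>k. gpp p k / real p ^ k) =
           (if p = 2 then 32/33 else inverse (1 + 1 / real p) * (1 + 1 / real p + 1 / (real p)\<^sup>2))"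
proof (cases "p = 2")
  case True
  then show ?thesis
    using sums_unique[OF gpp_local_sums[OF assms], symmetric] by (simp add: beta_pp_def power2_eq_square)
next
  case False
  define x where "x = 1 / real p"
  have "real p \<ge> 2"
    using prime_ge_2_nat[OF assms] by simp
  then have x: "0 < x" "x < 1"
    by (auto simp: x_def)
  have "(1 - x)\<^sup>2 * (1 + 2 * x) * (1 / (1 - x ^ 2) + 3 * (1 + x) / (1 + 2 * x) * (x ^ 2 / (1 - x ^ 2)\<^sup>2))
      = inverse (1 + x) * (1 + x + x\<^sup>2)"
  proof -
    have nz: "1 - x \<noteq> 0" "1 + x \<noteq> 0" "1 + 2 * x \<noteq> 0"
      using x by auto
    have sum_fractions: "1 / D + a / E * (b / D\<^sup>2) = (D * E + a * b) / (E * D\<^sup>2)"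
      if "D \<noteq> 0" "E \<noteq> 0" for D E a b :: real
      using that by (simp add: field_simps power2_eq_square)
    have cancel: "a\<^sup>2 * b * (c * q / (b * (a * c)\<^sup>2)) = inverse c * q"
      if "a \<noteq> 0" "b \<noteq> 0" "c \<noteq> 0" for a b c q :: real
      using that by (simp add: field_simps power2_eq_square)
    have factor: "1 - x ^ 2 = (1 - x) * (1 + x)"
      by (simp add: algebra_simps power2_eq_square)
    have "1 / (1 - x ^ 2) + 3 * (1 + x) / (1 + 2 * x) * (x ^ 2 / (1 - x ^ 2)\<^sup>2)
        = ((1 - x ^ 2) * (1 + 2 * x) + 3 * (1 + x) * x ^ 2) / ((1 + 2 * x) * (1 - x ^ 2)\<^sup>2)"
      using nz by (intro sum_fractions) (simp_all add: factor)
    also have "(1 - x ^ 2) * (1 + 2 * x) + 3 * (1 + x) * x ^ 2 = (1 + x) * (1 + x + x\<^sup>2)"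
      by (simp add: algebra_simps power2_eq_square)
    finally show ?thesis
      unfolding factor using cancel[OF nz(1,3,2)] by (simp only:)
  qed
  then show ?thesis
    using False sums_unique[OF gpp_local_sums[OF assms]]
    by (simp add: beta_pp_def x_def power_one_over)
qed

section \<open>The constant\<close>

definition c_coef_factor :: "nat \<Rightarrow> real" where
  "c_coef_factor p = (if prime p then (1 - 1 / real p)\<^sup>2 * (1 + 2 / real p) else 1)"

definition c_const_factor :: "nat \<Rightarrow> real" where
  "c_const_factor p =
     (if prime p \<and> p > 2 then inverse (1 + 1 / real p) * (1 + 1 / real p + 1 / (real p)\<^sup>2) else 1)"

lemma c_coef_eq: "c_coef h = 11/8 * f h * prodinf c_coef_factor"
  unfolding c_coef_def c_coef_factor_def[abs_def] ..

lemma c_const_eq: "c_const = 4/3 * prodinf c_const_factor"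
  unfolding c_const_def c_const_factor_def[abs_def] ..

text \<open>At n = 0 the hypothesis says a 0 = 1, as C / 0 = 0.\<close>

lemma convergent_prod_of_inverse_square_bound:
  fixes a :: "nat \<Rightarrow> real"
  assumes "\<And>n. \<bar>a n - 1\<bar> \<le> C / real n ^ 2"
  shows "convergent_prod a"
proof (intro abs_convergent_prod_imp_convergent_prod summable_imp_abs_convergent_prod)
  have "summable (\<lambda>n. C * inverse (real n ^ 2))"
    by (intro summable_mult inverse_power_summable) simp
  then show "summable (\<lambda>n. norm (a n - 1))"
    by (rule summable_comparison_test[rotated]) (use assms in \<open>auto simp: field_simps\<close>)
qed

lemma convergent_prod_c_coef_factor: "convergent_prod c_coef_factor"
proof (rule convergent_prod_of_inverse_square_bound)
  fix n
  define x where "x = 1 / real n"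
  have "0 \<le> x" "x \<le> 1"
    unfolding x_def by (auto simp: divide_le_eq_1)
  then have "0 \<le> x\<^sup>2 * (3 - 2 * x)" "x\<^sup>2 * (3 - 2 * x) \<le> x\<^sup>2 * 3"
    by (simp_all add: mult_left_mono)
  moreover have "(1 - x)\<^sup>2 * (1 + 2 * x) - 1 = - (x\<^sup>2 * (3 - 2 * x))"
    by (simp add: algebra_simps power2_eq_square)
  ultimately have "\<bar>(1 - x)\<^sup>2 * (1 + 2 * x) - 1\<bar> \<le> 3 * x\<^sup>2"
    by simp
  then show "\<bar>c_coef_factor n - 1\<bar> \<le> 3 / real n ^ 2"
    by (simp add: c_coef_factor_def x_def power_one_over)
qed

lemma convergent_prod_c_const_factor: "convergent_prod c_const_factor"
proof (rule convergent_prod_of_inverse_square_bound)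
  fix n
  define x where "x = 1 / real n"
  have "0 \<le> x"
    by (simp add: x_def)
  then have "\<bar>inverse (1 + x) * (1 + x + x\<^sup>2) - 1\<bar> \<le> x\<^sup>2"
    by (simp add: field_simps)
  then show "\<bar>c_const_factor n - 1\<bar> \<le> 1 / real n ^ 2"
    by (simp add: c_const_factor_def x_def power_one_over)
qed

lemma c_const_eq_euler_product: "c_const = 11/8 * prodinf c_coef_factor * (\<Sum>d. g d / real d)"
proof -
  define \<psi> where "\<psi> = (\<lambda>p k. gpp p k / real p ^ k)"
  define L where "L = (\<Sum>d. g d / real d)"
  have "(\<lambda>n. \<Prod>p\<le>n. if prime p then suminf (\<psi> p) else 1) \<longlonglongrightarrow> L"
  proof -
    have "summable (\<lambda>d. g d / real d)"
      using g_nonneg summable_g_divide_sqrt by (rule summable_divide_of_summable_divide_sqrt)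
    then show ?thesis
      unfolding L_def g_divide \<psi>_def
      by (intro euler_product_LIMSEQ) (auto intro: divide_nonneg_nonneg gpp_nonneg sums_summable[OF gpp_local_sums])
  qed
  then have lim_coef: "(\<lambda>n. (\<Prod>p\<le>n. c_coef_factor p) * (\<Prod>p\<le>n. if prime p then suminf (\<psi> p) else 1))
      \<longlonglongrightarrow> prodinf c_coef_factor * L"
    by (intro tendsto_mult convergent_prod_LIMSEQ convergent_prod_c_coef_factor)
  have local_factors: "(\<Prod>p\<le>n. c_coef_factor p) * (\<Prod>p\<le>n. if prime p then suminf (\<psi> p) else 1)
      = (if 2 \<le> n then 32/33 else 1) * (\<Prod>p\<le>n. c_const_factor p)" for n
  proof -
    have "c_coef_factor p * (if prime p then suminf (\<psi> p) else 1)
        = (if p = 2 then 32/33 else 1) * c_const_factor p" for p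
      using c_coef_factor_times_local_sum[of p] prime_ge_2_nat[of p]
      by (auto simp: c_coef_factor_def c_const_factor_def \<psi>_def)
    then have "(\<Prod>p\<le>n. c_coef_factor p) * (\<Prod>p\<le>n. if prime p then suminf (\<psi> p) else 1)
        = (\<Prod>p\<le>n. if p = 2 then 32/33 else 1) * (\<Prod>p\<le>n. c_const_factor p)"
      by (simp only: prod.distrib[symmetric])
    then show ?thesis
      by (simp add: prod.delta)
  qed
  have lim_const: "(\<lambda>n. (if 2 \<le> n then 32/33 else 1) * (\<Prod>p\<le>n. c_const_factor p))
      \<longlonglongrightarrow> 32/33 * prodinf c_const_factor"
  proof (intro tendsto_mult convergent_prod_LIMSEQ convergent_prod_c_const_factor)
    show "(\<lambda>n. if 2 \<le> n then 32/33 else 1) \<longlonglongrightarrow> (32/33 :: real)"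
      by (intro tendsto_eventually eventually_sequentiallyI[of 2]) simp
  qed
  have "prodinf c_coef_factor * L = 32/33 * prodinf c_const_factor"
    using LIMSEQ_unique[OF lim_coef[unfolded local_factors] lim_const] .
  then show ?thesis
    unfolding c_const_eq L_def by simp
qed

section \<open>The asymptotic formula\<close>

lemma abs_diff_le_sqrt_floor:
  fixes S :: "nat \<Rightarrow> real"
  assumes approx: "\<And>N. \<bar>S N - L * real N\<bar> \<le> B * sqrt (real N)" and "B \<ge> 0" and "H \<ge> 1"
  shows "\<bar>S (nat \<lfloor>H\<rfloor>) - L * H\<bar> \<le> (B + \<bar>L\<bar>) * sqrt H"
proof -
  define N where "N = nat \<lfloor>H\<rfloor>"
  have N: "real N \<le> H" "H - real N \<le> 1"
    using \<open>H \<ge> 1\<close> by (simp_all add: N_def) linarith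
  have "\<bar>S N - L * H\<bar> = \<bar>(S N - L * real N) + L * (real N - H)\<bar>"
    by (simp add: algebra_simps)
  also have "\<dots> \<le> \<bar>S N - L * real N\<bar> + \<bar>L\<bar> * (H - real N)"
    using N(1) abs_triangle_ineq[of "S N - L * real N" "L * (real N - H)"] by (simp add: abs_mult)
  also have "\<dots> \<le> B * sqrt H + \<bar>L\<bar> * sqrt H"
  proof (intro add_mono mult_left_mono)
    show "\<bar>S N - L * real N\<bar> \<le> B * sqrt H"
      using approx[of N] mult_left_mono[OF real_sqrt_le_mono[OF N(1)] \<open>B \<ge> 0\<close>] by linarith
    show "H - real N \<le> sqrt H"
      using N(2) real_sqrt_ge_one[OF \<open>H \<ge> 1\<close>] by linarith
  qed simp
  finally show ?thesis
    by (simp add: N_def algebra_simps)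
qed

theorem lemma5:
  shows "\<exists>C. \<forall>X H. X > 1 \<longrightarrow> H \<ge> 1 \<longrightarrow>
           \<bar>Sigma2 X H - c_const * X * H * (ln X) ^ 3\<bar> \<le> C * X * sqrt H * (ln X) ^ 3"
proof (intro exI allI impI)
  fix X H :: real
  assume "X > 1" "H \<ge> 1"
  define A where "A = 11/8 * prodinf c_coef_factor"
  define L where "L = (\<Sum>d. g d / real d)"
  define B where "B = (\<Sum>d. g d / sqrt (real d))"
  define S where "S N = (\<Sum>h\<in>{1..N}. f h)" for N
  have "B \<ge> 0"
    unfolding B_def by (intro suminf_nonneg summable_g_divide_sqrt divide_nonneg_nonneg g_nonneg) simp
  then have approx: "\<bar>S (nat \<lfloor>H\<rfloor>) - L * H\<bar> \<le> (B + \<bar>L\<bar>) * sqrt H"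
    using sum_f_approx \<open>H \<ge> 1\<close> unfolding S_def L_def B_def
    by (intro abs_diff_le_sqrt_floor) (simp_all add: mult.commute)
  have "Sigma2 X H - c_const * X * H * (ln X) ^ 3 = A * (X * (ln X) ^ 3) * (S (nat \<lfloor>H\<rfloor>) - L * H)"
    by (simp add: Sigma2_def c_coef_eq c_const_eq_euler_product S_def A_def L_def
        sum_distrib_left sum_distrib_right algebra_simps)
  then have "\<bar>Sigma2 X H - c_const * X * H * (ln X) ^ 3\<bar> = \<bar>A\<bar> * (X * (ln X) ^ 3) * \<bar>S (nat \<lfloor>H\<rfloor>) - L * H\<bar>"
    using \<open>X > 1\<close> by (simp add: abs_mult)
  also have "\<dots> \<le> \<bar>A\<bar> * (X * (ln X) ^ 3) * ((B + \<bar>L\<bar>) * sqrt H)"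
    using approx \<open>X > 1\<close> by (intro mult_left_mono) simp_all
  finally show "\<bar>Sigma2 X H - c_const * X * H * (ln X) ^ 3\<bar> \<le> \<bar>A\<bar> * (B + \<bar>L\<bar>) * X * sqrt H * (ln X) ^ 3"
    by (simp add: mult_ac)
qed

end
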